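(* The triple $(\mathcal{E}, \nabla^{\mathrm{sp}}, \gamma)$ with $\mathcal{E} = A^{4}$, $\nabla^{\mathrm{sp}}(e_{\alpha}) = 0$ (extended by the left Leibniz rule) and $\gamma(\mathrm{d} z^{i}\otimes_{A} e_{\alpha}) = \gamma_{\theta}^{i}\, e_{\alpha}$ (extended left $A$-linearly) is a spinorial structure on the Riemannian structure $(g,(\nabla,\sigma))$ on $\mathbb{R}^4_\theta$, i.e.\ it satisfies the Clifford relations $\gamma_{[2]}(\omega\otimes_A\zeta\otimes_A s)+\gamma_{[2]}(\sigma(\omega\otimes_A\zeta)\otimes_A s) = -2\,g^{-1}(\omega\otimes_A\zeta)\,s$ and Clifford compatibility $\nabla^{\mathrm{sp}}\circ\gamma = (\mathrm{id}\otimes_A\gamma)\circ\nabla^\otimes$.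
   Context: Let $A = \mathbb{C}[z^{1},z^{2},z^{3},z^{4}]/(z^{i} z^{j} - R^{ji} z^{j} z^{i})$ be the algebra of $\mathbb{R}^4_\theta$ in complex coordinates ($z^3=\overline{z^1}$, $z^4=\overline{z^2}$), where $R$ is the matrix with rows $(1,e^{-i\theta},1,e^{i\theta})$, $(e^{i\theta},1,e^{-i\theta},1)$, $(1,e^{i\theta},1,e^{-i\theta})$, $(e^{-i\theta},1,e^{i\theta},1)$, $\theta\in\mathbb{R}$. The differential calculus $\Omega^1_A$ is the free left $A$-module with basis $\mathrm{d} z^i$, with right action $\mathrm{d} z^i\, z^j = R^{ji} z^j\,\mathrm{d} z^i$ and $\mathrm{d}(z^i)=\mathrm{d} z^i$. The metric is $g=\sum_{i,j} g_{ij}\,\mathrm{d} z^i\otimes_A\mathrm{d} z^j$ with $(g_{ij}) = \tfrac{1}{2}$ times the matrix with rows $(0,0,1,0),(0,0,0,1),(1,0,0,0),(0,1,0,0)$, inverse metric $g^{-1}(\mathrm{d} z^i\otimes_A\mathrm{d} z^j)=g^{ij}$ with $(g^{ij})$ equal to $2$ times the same matrix. The bimodule connection is $\nabla(\mathrm{d} z^i)=0$ (left Leibniz rule) and $\sigma(\mathrm{d} z^i\otimes_A\mathrm{d} z^j) = R^{ji}\,\mathrm{d} z^j\otimes_A\mathrm{d} z^i$. $\{e_\alpha\}$ is the standard basis of $A^4$. The deformed gamma matrices are, in $2\times 2$ block form with Pauli matrices $\sigma^k$ and identity $I_2$: $\gamma_\theta^{1}$ has off-diagonal blocks $e^{\frac{i}{4}\theta}(-\sigma^{1}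 - i\sigma^{2})$ (upper right) and $e^{-\frac{i}{4}\theta}(\sigma^{1} + i\sigma^{2})$ (lower left); $\gamma_\theta^{2}$: $e^{-\frac{i}{4}\theta}(-\sigma^{3} - I_{2})$ and $e^{\frac{i}{4}\theta}(\sigma^{3} -I_{2})$; $\gamma_\theta^{3}$: $e^{\frac{i}{4}\theta}(-\sigma^{1} + i\sigma^{2})$ and $e^{-\frac{i}{4}\theta}(\sigma^{1} - i\sigma^{2})$; $\gamma_\theta^{4}$: $e^{-\frac{i}{4}\theta}(-\sigma^{3} + I_{2})$ and $e^{\frac{i}{4}\theta}(\sigma^{3} + I_{2})$. Here $\gamma_{[2]} = \gamma\circ(\mathrm{id}\otimes_A\gamma)$ and $\nabla^\otimes(\omega\otimes_A s) = \nabla(\omega)\otimes_A s + (\sigma\otimes_A\mathrm{id})(\omega\otimes_A\nabla^{\mathrm{sp}}(s))$. *)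

theory Defs
  imports Complex_Main
begin

definition idx :: "nat set" where "idx = {1..4}"

text \<open>Rmat th r c is the entry R^{rc} in row r, column c (r, c in 1..4).\<close>
definition Rmat :: "real \<Rightarrow> nat \<Rightarrow> nat \<Rightarrow> complex" where
  "Rmat th r c = (let e = cis th; e' = cis (- th) in
     [[1, e', 1, e], [e, 1, e', 1], [1, e, 1, e'], [e', 1, e, 1]] ! (r - 1) ! (c - 1))"

text \<open>A has the PBW basis of normally ordered monomials z1^(m 1) z2^(m 2) z3^(m 3) z4^(m 4);
  an element of A is a finitely supported coefficient function on exponent vectors
  m :: nat => nat that vanish outside 1..4.\<close>

type_synonym mono = "nat \<Rightarrow> nat"
type_synonym alg = "mono \<Rightarrow> complex"

definition isA :: "alg \<Rightarrow> bool" where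
  "isA f \<longleftrightarrow> finite {m. f m \<noteq> 0} \<and> (\<forall>m. f m \<noteq> 0 \<longrightarrow> (\<forall>k. k \<notin> idx \<longrightarrow> m k = 0))"

definition zeroA :: alg where "zeroA = (\<lambda>_. 0)"
definition oneA :: alg where "oneA = (\<lambda>m. if m = (\<lambda>_. 0) then 1 else 0)"
definition addA :: "alg \<Rightarrow> alg \<Rightarrow> alg" where "addA f g = (\<lambda>m. f m + g m)"
definition smulA :: "complex \<Rightarrow> alg \<Rightarrow> alg" where "smulA c f = (\<lambda>m. c * f m)"
definition sumA :: "('i \<Rightarrow> alg) \<Rightarrow> 'i set \<Rightarrow> alg" where
  "sumA F S = (\<lambda>m. \<Sum>x\<in>S. F x m)"

definition zgen :: "nat \<Rightarrow> alg" where
  "zgen i = (\<lambda>m. if m = (\<lambda>k. if k = i then 1 else 0) then 1 else 0)"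

text \<open>z^a z^b = phase a b z^(a+b), obtained by reordering with z^i z^j = R^{ji} z^j z^i.\<close>
definition phase :: "real \<Rightarrow> mono \<Rightarrow> mono \<Rightarrow> complex" where
  "phase th a b = (\<Prod>i\<in>idx. \<Prod>j\<in>idx. if j < i then (Rmat th j i) ^ (a i * b j) else 1)"

definition mulA :: "real \<Rightarrow> alg \<Rightarrow> alg \<Rightarrow> alg" where
  "mulA th f g = (\<lambda>c. \<Sum>a\<in>{m. f m \<noteq> 0}. \<Sum>b\<in>{m. g m \<noteq> 0}.
      if (\<lambda>k. a k + b k) = c then phase th a b * f a * g b else 0)"

text \<open>twist th i a is the element with dz^i a = (twist th i a) dz^i,
  from dz^i z^j = R^{ji} z^j dz^i.\<close>
definition twist :: "real \<Rightarrow> nat \<Rightarrow> alg \<Rightarrow> alg" where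
  "twist th i f = (\<lambda>m. (\<Prod>j\<in>idx. (Rmat th j i) ^ (m j)) * f m)"

section \<open>Free modules: coordinates w.r.t. the left bases dz^i, e_alpha, and their tensor products\<close>

type_synonym form1 = "nat \<Rightarrow> alg"            (* \<Omega>^1, coefficient of dz^i *)
type_synonym spinor = "nat \<Rightarrow> alg"           (* E = A^4, coefficient of e_alpha *)
type_synonym form_spinor = "nat \<Rightarrow> nat \<Rightarrow> alg"  (* \<Omega>^1 \<otimes>_A E, basis dz^i \<otimes> e_alpha *)
type_synonym form2 = "nat \<Rightarrow> nat \<Rightarrow> alg"        (* \<Omega>^1 \<otimes>_A \<Omega>^1, basis dz^i \<otimes> dz^j *)
type_synonym form2_spinor = "nat \<Rightarrow> nat \<Rightarrow> nat \<Rightarrow> alg" (* basis dz^i \<otimes> dz^j \<otimes> e_alpha *)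

definition isV :: "(nat \<Rightarrow> alg) \<Rightarrow> bool" where
  "isV v \<longleftrightarrow> (\<forall>i. isA (v i)) \<and> (\<forall>i. i \<notin> idx \<longrightarrow> v i = zeroA)"

definition restr1 :: "(nat \<Rightarrow> alg) \<Rightarrow> nat \<Rightarrow> alg" where
  "restr1 v = (\<lambda>i. if i \<in> idx then v i else zeroA)"
definition restr2 :: "(nat \<Rightarrow> nat \<Rightarrow> alg) \<Rightarrow> nat \<Rightarrow> nat \<Rightarrow> alg" where
  "restr2 v = (\<lambda>i j. if i \<in> idx \<and> j \<in> idx then v i j else zeroA)"
definition restr3 :: "(nat \<Rightarrow> nat \<Rightarrow> nat \<Rightarrow> alg) \<Rightarrow> nat \<Rightarrow> nat \<Rightarrow> nat \<Rightarrow> alg" where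
  "restr3 v = (\<lambda>i j k. if i \<in> idx \<and> j \<in> idx \<and> k \<in> idx then v i j k else zeroA)"

definition add1 :: "(nat \<Rightarrow> alg) \<Rightarrow> (nat \<Rightarrow> alg) \<Rightarrow> nat \<Rightarrow> alg" where
  "add1 v w = (\<lambda>i. addA (v i) (w i))"
definition smul1 :: "complex \<Rightarrow> (nat \<Rightarrow> alg) \<Rightarrow> nat \<Rightarrow> alg" where
  "smul1 c v = (\<lambda>i. smulA c (v i))"
definition add3 :: "form2_spinor \<Rightarrow> form2_spinor \<Rightarrow> form2_spinor" where
  "add3 X Y = (\<lambda>i j k. addA (X i j k) (Y i j k))"
definition sum3 :: "('i \<Rightarrow> form2_spinor) \<Rightarrow> 'i set \<Rightarrow> form2_spinor" where
  "sum3 F S = (\<lambda>i j k. sumA (\<lambda>x. F x i j k) S)"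

text \<open>left action a.v and right action on \<Omega>^1: (v_i dz^i) a = v_i twist_i(a) dz^i\<close>
definition lact1 :: "real \<Rightarrow> alg \<Rightarrow> (nat \<Rightarrow> alg) \<Rightarrow> nat \<Rightarrow> alg" where
  "lact1 th a v = (\<lambda>i. mulA th a (v i))"
definition ractO :: "real \<Rightarrow> form1 \<Rightarrow> alg \<Rightarrow> form1" where
  "ractO th v a = (\<lambda>i. mulA th (v i) (twist th i a))"

definition dz :: "nat \<Rightarrow> form1" where "dz i = (\<lambda>k. if k = i then oneA else zeroA)"
definition eE :: "nat \<Rightarrow> spinor" where "eE a = (\<lambda>k. if k = a then oneA else zeroA)"

text \<open>omega \<otimes>_A s, with omega in \<Omega>^1 and s in E (or s in \<Omega>^1)\<close>
definition tensOE :: "real \<Rightarrow> form1 \<Rightarrow> (nat \<Rightarrow> alg) \<Rightarrow> nat \<Rightarrow> nat \<Rightarrow> alg" where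
  "tensOE th w s = restr2 (\<lambda>i a. mulA th (w i) (twist th i (s a)))"
text \<open>omega \<otimes>_A U with U in \<Omega>^1 \<otimes>_A E\<close>
definition tensO_OE :: "real \<Rightarrow> form1 \<Rightarrow> form_spinor \<Rightarrow> form2_spinor" where
  "tensO_OE th w U = restr3 (\<lambda>i j a. mulA th (w i) (twist th i (U j a)))"
text \<open>T \<otimes>_A s with T in \<Omega>^1 \<otimes>_A \<Omega>^1 and s in E\<close>
definition tensOO_E :: "real \<Rightarrow> form2 \<Rightarrow> spinor \<Rightarrow> form2_spinor" where
  "tensOO_E th T s = restr3 (\<lambda>i j a. mulA th (T i j) (twist th i (twist th j (s a))))"

definition gup :: "nat \<Rightarrow> nat \<Rightarrow> complex" where
  "gup i j = 2 * (if (i, j) \<in> {(1,3), (2,4), (3,1), (4,2)} then 1 else 0)"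

definition ginv :: "form2 \<Rightarrow> alg" where
  "ginv T = sumA (\<lambda>(i, j). smulA (gup i j) (T i j)) (idx \<times> idx)"

text \<open>sigma(dz^i \<otimes> dz^j) = R^{ji} dz^j \<otimes> dz^i, extended left A-linearly\<close>
definition sigma :: "real \<Rightarrow> form2 \<Rightarrow> form2" where
  "sigma th T = restr2 (\<lambda>p q. smulA (Rmat th p q) (T q p))"
definition sigma_id :: "real \<Rightarrow> form2_spinor \<Rightarrow> form2_spinor" where
  "sigma_id th X = restr3 (\<lambda>p q a. smulA (Rmat th p q) (X q p a))"

text \<open>d is given as a hypothesis: the C-linear map A \<rightarrow> \<Omega>^1 with d(z^i) = dz^i
  satisfying the Leibniz rule.\<close>
definition is_diff :: "real \<Rightarrow> (alg \<Rightarrow> form1) \<Rightarrow> bool" where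
  "is_diff th d \<longleftrightarrow>
     (\<forall>i\<in>idx. d (zgen i) = dz i) \<and>
     (\<forall>f g. isA f \<longrightarrow> isA g \<longrightarrow> d (addA f g) = add1 (d f) (d g)) \<and>
     (\<forall>c f. isA f \<longrightarrow> d (smulA c f) = smul1 c (d f)) \<and>
     (\<forall>f g. isA f \<longrightarrow> isA g \<longrightarrow>
        d (mulA th f g) = add1 (ractO th (d f) g) (lact1 th f (d g)))"

text \<open>nabla(dz^i) = 0 with left Leibniz: nabla(sum w_i dz^i) = sum d(w_i) \<otimes> dz^i\<close>
definition nablaO :: "(alg \<Rightarrow> form1) \<Rightarrow> form1 \<Rightarrow> form2" where
  "nablaO d w = restr2 (\<lambda>k i. d (w i) k)"

text \<open>nabla^sp(e_alpha) = 0 with left Leibniz\<close>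
definition nablaSp :: "(alg \<Rightarrow> form1) \<Rightarrow> spinor \<Rightarrow> form_spinor" where
  "nablaSp d s = restr2 (\<lambda>k a. d (s a) k)"

text \<open>nabla^\<otimes>(w \<otimes> s) = nabla(w) \<otimes> s + (sigma \<otimes> id)(w \<otimes> nabla^sp(s)),
  extended additively via U = sum (U_{i,alpha} dz^i) \<otimes> e_alpha\<close>
definition nablaT_pure :: "real \<Rightarrow> (alg \<Rightarrow> form1) \<Rightarrow> form1 \<Rightarrow> spinor \<Rightarrow> form2_spinor" where
  "nablaT_pure th d w s =
     add3 (tensOO_E th (nablaO d w) s) (sigma_id th (tensO_OE th w (nablaSp d s)))"
definition nablaT :: "real \<Rightarrow> (alg \<Rightarrow> form1) \<Rightarrow> form_spinor \<Rightarrow> form2_spinor" where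
  "nablaT th d U = sum3 (\<lambda>(i, a). nablaT_pure th d (lact1 th (U i a) (dz i)) (eE a)) (idx \<times> idx)"

text \<open>Pauli matrices and identity (indices 1..2, row then column)\<close>
definition pauli :: "nat \<Rightarrow> nat \<Rightarrow> nat \<Rightarrow> complex" where
  "pauli k r c = (if k = 1 then [[0, 1], [1, 0]]
                  else if k = 2 then [[0, - \<i>], [\<i>, 0]]
                  else [[1, 0], [0, -1]]) ! (r - 1) ! (c - 1)"
definition I2 :: "nat \<Rightarrow> nat \<Rightarrow> complex" where "I2 r c = (if r = c then 1 else 0)"

definition offdiag :: "(nat \<Rightarrow> nat \<Rightarrow> complex) \<Rightarrow> (nat \<Rightarrow> nat \<Rightarrow> complex) \<Rightarrow> nat \<Rightarrow> nat \<Rightarrow> complex" where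
  "offdiag U L r c = (if r \<in> {1, 2} \<and> c \<in> {3, 4} then U r (c - 2)
                      else if r \<in> {3, 4} \<and> c \<in> {1, 2} then L (r - 2) c else 0)"

definition mlin :: "complex \<Rightarrow> (nat \<Rightarrow> nat \<Rightarrow> complex) \<Rightarrow> complex \<Rightarrow> (nat \<Rightarrow> nat \<Rightarrow> complex) \<Rightarrow> nat \<Rightarrow> nat \<Rightarrow> complex" where
  "mlin a M b N = (\<lambda>r c. a * M r c + b * N r c)"

text \<open>gam th i r c: entry (row r, column c) of gamma_theta^i\<close>
definition gam :: "real \<Rightarrow> nat \<Rightarrow> nat \<Rightarrow> nat \<Rightarrow> complex" where
  "gam th i = (let p = cis (th / 4); m = cis (- th / 4) in
     if i = 1 then offdiag (\<lambda>r c. p * mlin (-1) (pauli 1) (- \<i>) (pauli 2) r c)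
                          (\<lambda>r c. m * mlin 1 (pauli 1) \<i> (pauli 2) r c)
     else if i = 2 then offdiag (\<lambda>r c. m * mlin (-1) (pauli 3) (-1) I2 r c)
                          (\<lambda>r c. p * mlin 1 (pauli 3) (-1) I2 r c)
     else if i = 3 then offdiag (\<lambda>r c. p * mlin (-1) (pauli 1) \<i> (pauli 2) r c)
                          (\<lambda>r c. m * mlin 1 (pauli 1) (- \<i>) (pauli 2) r c)
     else offdiag (\<lambda>r c. m * mlin (-1) (pauli 3) 1 I2 r c)
                  (\<lambda>r c. p * mlin 1 (pauli 3) 1 I2 r c))"

text \<open>gamma(dz^i \<otimes> e_alpha) = gamma^i e_alpha, extended left A-linearly\<close>
definition gamma :: "real \<Rightarrow> form_spinor \<Rightarrow> spinor" where
  "gamma th U = restr1 (\<lambda>b. sumA (\<lambda>(i, a). smulA (gam th i b a) (U i a)) (idx \<times> idx))"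
definition id_gamma :: "real \<Rightarrow> form2_spinor \<Rightarrow> form_spinor" where
  "id_gamma th X = restr2 (\<lambda>i b. sumA (\<lambda>(j, a). smulA (gam th j b a) (X i j a)) (idx \<times> idx))"
definition gamma2 :: "real \<Rightarrow> form2_spinor \<Rightarrow> spinor" where
  "gamma2 th X = gamma th (id_gamma th X)"

end

(*
  All maps are computed on coefficients in the left bases dz^i and e_a.  Let tau_i be the
  automorphism of A with dz^i f = tau_i(f) dz^i; it rescales each monomial.  By associativity
  of A and multiplicativity of tau_i, the coefficient of dz^i (x) dz^j (x) e_a in
  w (x) z (x) s is Y_ija = w_i tau_i(z_j) tau_i tau_j(s_a), and the sigma-term has coefficient
  R^{ij} Y_jia.  After relabelling, the left side of the Clifford relation has b-th coefficient
  sum_ija (gamma^i gamma^j + R^{ji} gamma^j gamma^i)_ba Y_ija, and the matrix identity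
  gamma^i gamma^j + R^{ji} gamma^j gamma^i = -2 g^{ij} (an entrywise polynomial identity in
  p = e^{i theta/4}) leaves -2 sum_ij g^{ij} Y_ijb.  This is the right side, because
  tau_i tau_j = id whenever g^{ij} is nonzero.

  For compatibility, nabla and nabla^sp kill the basis elements and d 1 = 0, so
  nabla^(x)(U_ia dz^i (x) e_a) = d U_ia (x) dz^i (x) e_a; both sides are then d applied to the
  coefficients of gamma(U), which are constant linear combinations of the U_ia.
*)

theory Submission
  imports Defs
begin

section \<open>The algebra A\<close>

abbreviation supp :: "alg \<Rightarrow> mono set" where "supp f \<equiv> {m. f m \<noteq> 0}"

definition monomial :: "mono \<Rightarrow> alg" where "monomial a = (\<lambda>m. if m = a then 1 else 0)"

lemma sumA_empty: "sumA F {} = zeroA"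
  by (simp add: sumA_def zeroA_def)

lemma sumA_insert: "finite S \<Longrightarrow> x \<notin> S \<Longrightarrow> sumA F (insert x S) = addA (F x) (sumA F S)"
  by (simp add: sumA_def addA_def)

lemma sumA_cong: "(\<And>x. x \<in> S \<Longrightarrow> F x = G x) \<Longrightarrow> sumA F S = sumA G S"
  by (simp add: sumA_def)

lemma sumA_delta:
  "finite S \<Longrightarrow> sumA (\<lambda>x. if x = y then f else zeroA) S = (if y \<in> S then f else zeroA)"
  by (induction S rule: finite_induct) (auto simp: sumA_empty sumA_insert addA_def zeroA_def)

lemma mulA_eq_sum:
  assumes "finite S" "finite T" "supp f \<subseteq> S" "supp g \<subseteq> T"
  shows "mulA th f g c =
    (\<Sum>a\<in>S. \<Sum>b\<in>T. if (\<lambda>k. a k + b k) = c then phase th a b * f a * g b else 0)"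
proof -
  have "finite (supp g)" using assms finite_subset by blast
  then have "mulA th f g c =
      (\<Sum>a\<in>S. \<Sum>b\<in>supp g. if (\<lambda>k. a k + b k) = c then phase th a b * f a * g b else 0)"
    unfolding mulA_def using assms by (intro sum.mono_neutral_left) (auto intro: sum.neutral)
  also have "\<dots> = (\<Sum>a\<in>S. \<Sum>b\<in>T. if (\<lambda>k. a k + b k) = c then phase th a b * f a * g b else 0)"
    using assms by (intro sum.cong refl sum.mono_neutral_left) auto
  finally show ?thesis .
qed

lemma mulA_infinite_supp:
  "infinite (supp f) \<or> infinite (supp g) \<Longrightarrow> mulA th f g = zeroA"
  by (auto simp: mulA_def zeroA_def)

lemma mulA_zeroA_left: "mulA th zeroA g = zeroA"
  by (simp add: mulA_def zeroA_def)

lemma mulA_zeroA_right: "mulA th f zeroA = zeroA"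
  by (simp add: mulA_def zeroA_def)

lemma finite_supp_mulA: "finite (supp (mulA th f g))"
proof (cases "finite (supp f) \<and> finite (supp g)")
  case True
  have "supp (mulA th f g) \<subseteq> (\<lambda>(a, b). (\<lambda>k. a k + b k)) ` (supp f \<times> supp g)"
  proof
    fix c assume "c \<in> supp (mulA th f g)"
    then obtain a b where "a \<in> supp f" "b \<in> supp g"
      "(if (\<lambda>k. a k + b k) = c then phase th a b * f a * g b else 0) \<noteq> 0"
      unfolding mulA_def by (auto elim!: sum.not_neutral_contains_not_neutral)
    then show "c \<in> (\<lambda>(a, b). (\<lambda>k. a k + b k)) ` (supp f \<times> supp g)"
      by (force split: if_splits)
  qed
  then show ?thesis using True by (auto intro: finite_subset)
next
  case False
  then show ?thesis by (simp add: mulA_infinite_supp zeroA_def)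
qed

lemma finite_supp_addA: "finite (supp f) \<Longrightarrow> finite (supp g) \<Longrightarrow> finite (supp (addA f g))"
  unfolding addA_def by (rule finite_subset[of _ "supp f \<union> supp g"]) auto

lemma finite_supp_smulA: "finite (supp f) \<Longrightarrow> finite (supp (smulA c f))"
  unfolding smulA_def by (rule finite_subset[of _ "supp f"]) auto

lemma finite_supp_sumA:
  "finite S \<Longrightarrow> (\<And>x. x \<in> S \<Longrightarrow> finite (supp (F x))) \<Longrightarrow> finite (supp (sumA F S))"
  by (induction S rule: finite_induct) (simp_all add: sumA_empty sumA_insert finite_supp_addA zeroA_def)

lemma if_add_if:
  "(if P then x else 0) + (if P then y else 0) = (if P then x + y else (0::'a::monoid_add))"
  by simp

lemma mulA_addA_left:
  assumes "finite (supp f1)" "finite (supp f2)" "finite (supp g)"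
  shows "mulA th (addA f1 f2) g = addA (mulA th f1 g) (mulA th f2 g)"
proof
  fix c
  let ?S = "supp f1 \<union> supp f2"
  have expand: "mulA th h g c = (\<Sum>a\<in>?S. \<Sum>b\<in>supp g.
      if (\<lambda>k. a k + b k) = c then phase th a b * h a * g b else 0)" if "supp h \<subseteq> ?S" for h
    using assms that by (intro mulA_eq_sum) auto
  have "supp (addA f1 f2) \<subseteq> ?S" by (auto simp: addA_def)
  then show "mulA th (addA f1 f2) g c = addA (mulA th f1 g) (mulA th f2 g) c"
    by (simp add: expand addA_def sum.distrib[symmetric] distrib_left distrib_right if_add_if
        cong: if_cong)
qed

lemma mulA_addA_right:
  assumes "finite (supp f)" "finite (supp g1)" "finite (supp g2)"
  shows "mulA th f (addA g1 g2) = addA (mulA th f g1) (mulA th f g2)"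
proof
  fix c
  let ?T = "supp g1 \<union> supp g2"
  have expand: "mulA th f h c = (\<Sum>a\<in>supp f. \<Sum>b\<in>?T.
      if (\<lambda>k. a k + b k) = c then phase th a b * f a * h b else 0)" if "supp h \<subseteq> ?T" for h
    using assms that by (intro mulA_eq_sum) auto
  have "supp (addA g1 g2) \<subseteq> ?T" by (auto simp: addA_def)
  then show "mulA th f (addA g1 g2) c = addA (mulA th f g1) (mulA th f g2) c"
    by (simp add: expand addA_def sum.distrib[symmetric] distrib_left distrib_right if_add_if
        cong: if_cong)
qed

lemma mulA_smulA_left:
  assumes "finite (supp f)" "finite (supp g)"
  shows "mulA th (smulA x f) g = smulA x (mulA th f g)"
proof
  fix c
  have expand: "mulA th h g c = (\<Sum>a\<in>supp f. \<Sum>b\<in>supp g.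
      if (\<lambda>k. a k + b k) = c then phase th a b * h a * g b else 0)" if "supp h \<subseteq> supp f" for h
    using assms that by (intro mulA_eq_sum) auto
  have "supp (smulA x f) \<subseteq> supp f" by (auto simp: smulA_def)
  then show "mulA th (smulA x f) g c = smulA x (mulA th f g) c"
    by (simp add: expand smulA_def sum_distrib_left if_distrib[of "(*) x"] mult_ac cong: if_cong)
qed

lemma mulA_smulA_right:
  assumes "finite (supp f)" "finite (supp g)"
  shows "mulA th f (smulA x g) = smulA x (mulA th f g)"
proof
  fix c
  have expand: "mulA th f h c = (\<Sum>a\<in>supp f. \<Sum>b\<in>supp g.
      if (\<lambda>k. a k + b k) = c then phase th a b * f a * h b else 0)" if "supp h \<subseteq> supp g" for h
    using assms that by (intro mulA_eq_sum) auto
  have "supp (smulA x g) \<subseteq> supp g" by (auto simp: smulA_def)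
  then show "mulA th f (smulA x g) c = smulA x (mulA th f g) c"
    by (simp add: expand smulA_def sum_distrib_left if_distrib[of "(*) x"] mult_ac cong: if_cong)
qed

lemma mulA_sumA_left:
  assumes "finite S" "\<And>x. x \<in> S \<Longrightarrow> finite (supp (F x))" "finite (supp g)"
  shows "mulA th (sumA F S) g = sumA (\<lambda>x. mulA th (F x) g) S"
  using assms
  by (induction S rule: finite_induct)
    (simp_all add: sumA_empty sumA_insert mulA_addA_left finite_supp_sumA mulA_zeroA_left)

lemma mulA_sumA_right:
  assumes "finite S" "\<And>x. x \<in> S \<Longrightarrow> finite (supp (F x))" "finite (supp f)"
  shows "mulA th f (sumA F S) = sumA (\<lambda>x. mulA th f (F x)) S"
  using assms
  by (induction S rule: finite_induct)
    (simp_all add: sumA_empty sumA_insert mulA_addA_right finite_supp_sumA mulA_zeroA_right)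

lemma monomial_expansion:
  assumes "finite (supp f)"
  shows "f = sumA (\<lambda>a. smulA (f a) (monomial a)) (supp f)"
proof
  fix x
  have "sumA (\<lambda>a. smulA (f a) (monomial a)) (supp f) x = (\<Sum>a\<in>supp f. if x = a then f a else 0)"
    unfolding sumA_def smulA_def monomial_def by (intro sum.cong) auto
  also have "\<dots> = f x" using assms by (simp add: sum.delta)
  finally show "f x = sumA (\<lambda>a. smulA (f a) (monomial a)) (supp f) x" ..
qed

lemma finite_supp_monomial: "finite (supp (monomial a))"
  by (simp add: monomial_def)

lemma mulA_monomial:
  "mulA th (monomial a) (monomial b) = smulA (phase th a b) (monomial (\<lambda>k. a k + b k))"
proof
  fix c
  have "mulA th (monomial a) (monomial b) c =
      (\<Sum>a'\<in>{a}. \<Sum>b'\<in>{b}. if (\<lambda>k. a' k + b' k) = c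
         then phase th a' b' * monomial a a' * monomial b b' else 0)"
    by (rule mulA_eq_sum) (auto simp: monomial_def)
  then show "mulA th (monomial a) (monomial b) c = smulA (phase th a b) (monomial (\<lambda>k. a k + b k)) c"
    by (auto simp: monomial_def smulA_def)
qed

lemma phase_add_left: "phase th (\<lambda>k. a k + b k) c = phase th a c * phase th b c"
proof -
  have "(if j < i then Rmat th j i ^ ((a i + b i) * c j) else 1) =
      (if j < i then Rmat th j i ^ (a i * c j) else 1) * (if j < i then Rmat th j i ^ (b i * c j) else 1)"
    for i j by (simp add: add_mult_distrib power_add)
  then show ?thesis unfolding phase_def by (simp add: prod.distrib)
qed

lemma phase_add_right: "phase th a (\<lambda>k. b k + c k) = phase th a b * phase th a c"
proof -
  have "(if j < i then Rmat th j i ^ (a i * (b j + c j)) else 1) =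
      (if j < i then Rmat th j i ^ (a i * b j) else 1) * (if j < i then Rmat th j i ^ (a i * c j) else 1)"
    for i j by (simp add: add_mult_distrib2 power_add)
  then show ?thesis unfolding phase_def by (simp add: prod.distrib)
qed

lemma phase_zero_left: "phase th (\<lambda>_. 0) b = 1"
  unfolding phase_def by (intro prod.neutral ballI) simp

lemma phase_zero_right: "phase th a (\<lambda>_. 0) = 1"
  unfolding phase_def by (intro prod.neutral ballI) simp

lemma mulA_assoc_monomial:
  "mulA th (mulA th (monomial a) (monomial b)) (monomial c) =
   mulA th (monomial a) (mulA th (monomial b) (monomial c))"
proof -
  have "(\<lambda>k. (a k + b k) + c k) = (\<lambda>k. a k + (b k + c k))" by (simp add: add.assoc)
  then show ?thesis
    by (simp add: mulA_monomial mulA_smulA_left mulA_smulA_right finite_supp_monomial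
        phase_add_left phase_add_right)
      (simp add: smulA_def mult_ac)
qed

lemma mulA_assoc:
  assumes "finite (supp f)" "finite (supp g)" "finite (supp h)"
  shows "mulA th (mulA th f g) h = mulA th f (mulA th g h)"
  by (subst (1 2) monomial_expansion[OF assms(1)], subst (1 2) monomial_expansion[OF assms(2)],
      subst (1 2) monomial_expansion[OF assms(3)])
    (simp add: assms mulA_sumA_left mulA_sumA_right mulA_smulA_left mulA_smulA_right
      finite_supp_sumA finite_supp_smulA finite_supp_monomial finite_supp_mulA mulA_assoc_monomial)

lemma oneA_eq_monomial: "oneA = monomial (\<lambda>_. 0)"
  by (simp add: oneA_def monomial_def)

lemma mulA_oneA_left:
  assumes "finite (supp f)"
  shows "mulA th oneA f = f"
proof -
  have "mulA th oneA (monomial b) = monomial b" for b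
    by (simp add: oneA_eq_monomial mulA_monomial phase_zero_left smulA_def)
  then show ?thesis
    by (subst (1 2) monomial_expansion[OF assms])
      (simp add: assms mulA_sumA_right mulA_smulA_right finite_supp_smulA finite_supp_monomial
        oneA_eq_monomial)
qed

lemma mulA_oneA_right:
  assumes "finite (supp f)"
  shows "mulA th f oneA = f"
proof -
  have "mulA th (monomial a) oneA = monomial a" for a
    by (simp add: oneA_eq_monomial mulA_monomial phase_zero_right smulA_def)
  then show ?thesis
    by (subst (1 2) monomial_expansion[OF assms])
      (simp add: assms mulA_sumA_left mulA_smulA_left finite_supp_smulA finite_supp_monomial
        oneA_eq_monomial)
qed

definition twist_factor :: "real \<Rightarrow> nat \<Rightarrow> mono \<Rightarrow> complex" where
  "twist_factor th i m = (\<Prod>j\<in>idx. Rmat th j i ^ m j)"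

lemma twist_eq: "twist th i f = (\<lambda>m. twist_factor th i m * f m)"
  by (simp add: twist_def twist_factor_def)

lemma twist_factor_add:
  "twist_factor th i (\<lambda>k. a k + b k) = twist_factor th i a * twist_factor th i b"
  by (simp add: twist_factor_def power_add prod.distrib)

lemma twist_zeroA: "twist th i zeroA = zeroA"
  by (simp add: twist_eq zeroA_def)

lemma twist_oneA: "twist th i oneA = oneA"
  by (auto simp: twist_eq oneA_def twist_factor_def)

lemma finite_supp_twist: "finite (supp f) \<Longrightarrow> finite (supp (twist th i f))"
  unfolding twist_eq by (rule finite_subset[of _ "supp f"]) auto

lemma twist_mulA:
  assumes "finite (supp f)" "finite (supp g)"
  shows "twist th i (mulA th f g) = mulA th (twist th i f) (twist th i g)"
proof
  fix c
  have expand: "mulA th f' g' c = (\<Sum>a\<in>supp f. \<Sum>b\<in>supp g.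
      if (\<lambda>k. a k + b k) = c then phase th a b * f' a * g' b else 0)"
    if "supp f' \<subseteq> supp f" "supp g' \<subseteq> supp g" for f' g'
    using assms that by (intro mulA_eq_sum) auto
  have "supp (twist th i f) \<subseteq> supp f" "supp (twist th i g) \<subseteq> supp g"
    by (auto simp: twist_eq)
  then show "twist th i (mulA th f g) c = mulA th (twist th i f) (twist th i g) c"
    by (simp add: expand twist_eq sum_distrib_left)
      (auto simp: twist_factor_add intro!: sum.cong)
qed

lemma twist_commute: "twist th i (twist th j f) = twist th j (twist th i f)"
  by (simp add: twist_eq mult_ac)

lemma idx_eq: "idx = {1, 2, 3, 4}"
  by (auto simp: idx_def)

lemma finite_idx [simp]: "finite idx"
  by (simp add: idx_def)

lemma gup_nonzero: "gup i j \<noteq> 0 \<Longrightarrow> (i, j) \<in> {(1, 3), (2, 4), (3, 1), (4, 2)}"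
  by (auto simp: gup_def split: if_splits)

lemma Rmat_metric_pair:
  assumes "k \<in> idx" "gup i j \<noteq> 0"
  shows "Rmat th k i * Rmat th k j = 1"
  using assms gup_nonzero[OF assms(2)]
  by (auto simp: idx_eq Rmat_def cis_mult)

lemma twist_metric_pair:
  assumes "gup i j \<noteq> 0"
  shows "twist th i (twist th j f) = f"
proof -
  have "twist_factor th i m * twist_factor th j m = 1" for m
    using Rmat_metric_pair[OF _ assms]
    by (simp add: twist_factor_def power_mult_distrib[symmetric] prod.distrib[symmetric])
  then show ?thesis by (simp add: twist_eq mult.assoc[symmetric])
qed

text \<open>The nonzero entries of gam th i for p = cis (th / 4), and Rmat th with cis th = p ^ 4.\<close>

definition gamma_table :: "complex \<Rightarrow> nat \<Rightarrow> nat \<Rightarrow> nat \<Rightarrow> complex" where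
  "gamma_table p i r c =
    (if (i, r, c) = (1, 1, 4) then -2 * p else if (i, r, c) = (1, 3, 2) then 2 * inverse p
     else if (i, r, c) = (2, 1, 3) then -2 * inverse p else if (i, r, c) = (2, 4, 2) then -2 * p
     else if (i, r, c) = (3, 2, 3) then -2 * p else if (i, r, c) = (3, 4, 1) then 2 * inverse p
     else if (i, r, c) = (4, 2, 4) then 2 * inverse p else if (i, r, c) = (4, 3, 1) then 2 * p
     else 0)"

definition R_table :: "complex \<Rightarrow> nat \<Rightarrow> nat \<Rightarrow> complex" where
  "R_table p r c =
    [[1, inverse p ^ 4, 1, p ^ 4], [p ^ 4, 1, inverse p ^ 4, 1],
     [1, p ^ 4, 1, inverse p ^ 4], [inverse p ^ 4, 1, p ^ 4, 1]] ! (r - 1) ! (c - 1)"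

lemma gamma_table_twisted_clifford:
  fixes p :: complex
  assumes "p \<noteq> 0" "i \<in> idx" "j \<in> idx" "b \<in> idx" "a \<in> idx"
  shows "(\<Sum>c\<in>idx. gamma_table p i b c * gamma_table p j c a)
       + R_table p j i * (\<Sum>c\<in>idx. gamma_table p j b c * gamma_table p i c a)
       = -2 * gup i j * (if b = a then 1 else 0)"
  using assms(2-5) unfolding idx_eq
  by (elim insertE emptyE; simp add: gamma_table_def R_table_def gup_def field_simps assms(1))
    (simp_all add: power4_eq_xxxx mult.assoc)

lemma gam_eq_gamma_table:
  assumes "i \<in> idx" "r \<in> idx" "c \<in> idx"
  shows "gam th i r c = gamma_table (cis (th / 4)) i r c"
  using assms unfolding idx_eq gam_def Let_def cis_inverse[symmetric] minus_divide_left[symmetric]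
  by (elim insertE emptyE)
    (simp_all add: gamma_table_def offdiag_def mlin_def pauli_def I2_def del: cis_inverse)

lemma Rmat_eq_R_table:
  assumes "r \<in> idx" "c \<in> idx"
  shows "Rmat th r c = R_table (cis (th / 4)) r c"
proof -
  have "cis th = cis (th / 4) ^ 4" by (simp add: DeMoivre)
  moreover have "cis (- th) = inverse (cis (th / 4)) ^ 4"
    by (simp add: DeMoivre)
  ultimately show ?thesis
    using assms unfolding idx_eq Rmat_def Let_def R_table_def
    by (elim insertE emptyE) (simp_all del: cis_inverse)
qed

lemma gam_twisted_clifford:
  assumes "i \<in> idx" "j \<in> idx" "b \<in> idx" "a \<in> idx"
  shows "(\<Sum>c\<in>idx. gam th i b c * gam th j c a)
       + Rmat th j i * (\<Sum>c\<in>idx. gam th j b c * gam th i c a)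
       = -2 * gup i j * (if b = a then 1 else 0)"
  using gamma_table_twisted_clifford[of "cis (th / 4)" i j b a] assms
  by (simp add: gam_eq_gamma_table Rmat_eq_R_table cong: sum.cong)

section \<open>Clifford relations\<close>

lemma isV_finite_supp: "isV v \<Longrightarrow> finite (supp (v i))"
  by (simp add: isV_def isA_def)

text \<open>The coefficient of dz^i \<otimes> dz^j \<otimes> e_a in w \<otimes> z \<otimes> s: dz^i is moved past z_j, and
  dz^i \<otimes> dz^j past s_a.\<close>

definition tens3_coeff ::
    "real \<Rightarrow> form1 \<Rightarrow> form1 \<Rightarrow> spinor \<Rightarrow> nat \<Rightarrow> nat \<Rightarrow> nat \<Rightarrow> alg" where
  "tens3_coeff th w z s i j a =
     mulA th (mulA th (w i) (twist th i (z j))) (twist th i (twist th j (s a)))"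

lemma tensO_OE_tensOE:
  assumes "\<And>k. finite (supp (w k))" "\<And>k. finite (supp (z k))" "\<And>k. finite (supp (s k))"
    and "i \<in> idx" "j \<in> idx" "a \<in> idx"
  shows "tensO_OE th w (tensOE th z s) i j a = tens3_coeff th w z s i j a"
proof -
  have "tensO_OE th w (tensOE th z s) i j a = mulA th (w i) (twist th i (mulA th (z j) (twist th j (s a))))"
    using assms by (simp add: tensO_OE_def tensOE_def restr3_def restr2_def)
  also have "\<dots> = mulA th (w i) (mulA th (twist th i (z j)) (twist th i (twist th j (s a))))"
    using assms by (simp add: twist_mulA finite_supp_twist)
  also have "\<dots> = tens3_coeff th w z s i j a"
    unfolding tens3_coeff_def using assms by (simp add: mulA_assoc finite_supp_twist)
  finally show ?thesis .
qed

lemma tensOO_E_sigma_tensOE: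
  assumes "\<And>k. finite (supp (s k))" and "i \<in> idx" "j \<in> idx" "a \<in> idx"
  shows "tensOO_E th (sigma th (tensOE th w z)) s i j a = smulA (Rmat th i j) (tens3_coeff th w z s j i a)"
  using assms
  by (simp add: tensOO_E_def sigma_def tensOE_def restr3_def restr2_def tens3_coeff_def
      mulA_smulA_left finite_supp_mulA finite_supp_twist twist_commute[of th i j])

lemma gamma2_apply:
  assumes "b \<in> idx"
  shows "gamma2 th X b m =
    (\<Sum>i\<in>idx. \<Sum>j\<in>idx. \<Sum>a\<in>idx. (\<Sum>c\<in>idx. gam th i b c * gam th j c a) * X i j a m)"
proof -
  have "gamma2 th X b m = (\<Sum>(i, c)\<in>idx \<times> idx. gam th i b c * id_gamma th X i c m)"
    using assms by (simp add: gamma2_def gamma_def restr1_def sumA_def smulA_def case_prod_beta')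
  also have "\<dots> = (\<Sum>(i, c)\<in>idx \<times> idx. gam th i b c * (\<Sum>(j, a)\<in>idx \<times> idx. gam th j c a * X i j a m))"
    by (intro sum.cong refl) (auto simp: id_gamma_def restr2_def sumA_def smulA_def case_prod_beta')
  also have "\<dots> = (\<Sum>i\<in>idx. \<Sum>c\<in>idx. \<Sum>j\<in>idx. \<Sum>a\<in>idx. gam th i b c * (gam th j c a * X i j a m))"
    by (simp add: sum.cartesian_product[symmetric] sum_distrib_left)
  also have "\<dots> = (\<Sum>i\<in>idx. \<Sum>j\<in>idx. \<Sum>c\<in>idx. \<Sum>a\<in>idx. gam th i b c * (gam th j c a * X i j a m))"
    by (rule sum.cong[OF refl], rule sum.swap)
  also have "\<dots> = (\<Sum>i\<in>idx. \<Sum>j\<in>idx. \<Sum>a\<in>idx. \<Sum>c\<in>idx. gam th i b c * (gam th j c a * X i j a m))"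
    by (rule sum.cong[OF refl], rule sum.cong[OF refl], rule sum.swap)
  finally show ?thesis
    by (simp add: sum_distrib_right mult.assoc)
qed

lemma gamma2_twisted_clifford:
  assumes X: "\<And>i j a. i \<in> idx \<Longrightarrow> j \<in> idx \<Longrightarrow> a \<in> idx \<Longrightarrow> X i j a = Y i j a"
    and X': "\<And>i j a. i \<in> idx \<Longrightarrow> j \<in> idx \<Longrightarrow> a \<in> idx \<Longrightarrow>
      X' i j a = smulA (Rmat th i j) (Y j i a)"
    and b: "b \<in> idx"
  shows "gamma2 th X b m + gamma2 th X' b m = (\<Sum>i\<in>idx. \<Sum>j\<in>idx. -2 * gup i j * Y i j b m)"
proof -
  let ?M = "\<lambda>i j a. \<Sum>c\<in>idx. gam th i b c * gam th j c a"
  have "gamma2 th X' b m = (\<Sum>i\<in>idx. \<Sum>j\<in>idx. \<Sum>a\<in>idx. ?M i j a * (Rmat th i j * Y j i a m))"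
    unfolding gamma2_apply[OF b] by (intro sum.cong refl) (simp add: X' smulA_def)
  also have "\<dots> = (\<Sum>i\<in>idx. \<Sum>j\<in>idx. \<Sum>a\<in>idx. ?M j i a * (Rmat th j i * Y i j a m))"
    by (rule sum.swap)
  finally have "gamma2 th X b m + gamma2 th X' b m =
      (\<Sum>i\<in>idx. \<Sum>j\<in>idx. \<Sum>a\<in>idx. (?M i j a + Rmat th j i * ?M j i a) * Y i j a m)"
    unfolding gamma2_apply[OF b] using X by (simp add: sum.distrib[symmetric] algebra_simps)
  also have "\<dots> = (\<Sum>i\<in>idx. \<Sum>j\<in>idx. \<Sum>a\<in>idx. (if b = a then -2 * gup i j * Y i j a m else 0))"
    using b by (intro sum.cong refl) (simp add: gam_twisted_clifford)
  also have "\<dots> = (\<Sum>i\<in>idx. \<Sum>j\<in>idx. -2 * gup i j * Y i j b m)"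
    using b by (simp add: sum.delta)
  finally show ?thesis .
qed

lemma lact1_ginv_tensOE:
  assumes "\<And>k. finite (supp (s k))" and b: "b \<in> idx"
  shows "lact1 th (smulA (-2) (ginv (tensOE th w z))) s b m =
    (\<Sum>i\<in>idx. \<Sum>j\<in>idx. -2 * gup i j * tens3_coeff th w z s i j b m)"
proof -
  let ?T = "tensOE th w z"
  have fin_T: "finite (supp (?T i j))" for i j
    by (simp add: tensOE_def restr2_def finite_supp_mulA zeroA_def)
  have expand: "lact1 th (smulA (-2) (ginv ?T)) s b =
      smulA (-2) (sumA (\<lambda>(i, j). smulA (gup i j) (mulA th (?T i j) (s b))) (idx \<times> idx))"
    unfolding lact1_def ginv_def using assms fin_T
    by (simp add: mulA_smulA_left mulA_sumA_left finite_supp_sumA finite_supp_smulA case_prod_beta')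
  have paired: "gup i j * mulA th (?T i j) (s b) m = gup i j * tens3_coeff th w z s i j b m"
    if "i \<in> idx" "j \<in> idx" for i j
  proof (cases "gup i j = 0")
    case False
    then show ?thesis
      using that by (simp add: twist_metric_pair tens3_coeff_def tensOE_def restr2_def)
  qed simp
  have "lact1 th (smulA (-2) (ginv ?T)) s b m =
      -2 * (\<Sum>(i, j)\<in>idx \<times> idx. gup i j * mulA th (?T i j) (s b) m)"
    unfolding expand by (simp add: smulA_def sumA_def case_prod_beta')
  also have "\<dots> = -2 * (\<Sum>i\<in>idx. \<Sum>j\<in>idx. gup i j * tens3_coeff th w z s i j b m)"
    by (simp add: sum.cartesian_product[symmetric] paired cong: sum.cong)
  finally show ?thesis
    by (simp add: sum_distrib_left mult.assoc)
qed

lemma clifford_relation: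
  assumes "isV w" "isV z" "isV s"
  shows "add1 (gamma2 th (tensO_OE th w (tensOE th z s)))
              (gamma2 th (tensOO_E th (sigma th (tensOE th w z)) s))
         = lact1 th (smulA (-2) (ginv (tensOE th w z))) s" (is "?lhs = ?rhs")
proof (intro ext)
  fix b m
  have fin: "finite (supp (w k))" "finite (supp (z k))" "finite (supp (s k))" for k
    using assms by (simp_all add: isV_finite_supp)
  show "?lhs b m = ?rhs b m"
  proof (cases "b \<in> idx")
    case True
    then show ?thesis
      using fin unfolding add1_def addA_def lact1_ginv_tensOE[OF fin(3) True]
      by (intro gamma2_twisted_clifford tensO_OE_tensOE tensOO_E_sigma_tensOE)
  next
    case False
    then have "s b = zeroA" using assms(3) by (simp add: isV_def)
    with False show ?thesis
      by (simp add: add1_def gamma2_def gamma_def restr1_def lact1_def mulA_zeroA_right)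
        (simp add: addA_def zeroA_def)
  qed
qed

section \<open>Clifford compatibility\<close>

lemma isA_zeroA: "isA zeroA"
  by (simp add: isA_def zeroA_def)

lemma isA_oneA: "isA oneA"
  by (simp add: isA_def oneA_def)

lemma isA_addA: "isA f \<Longrightarrow> isA g \<Longrightarrow> isA (addA f g)"
  unfolding isA_def addA_def
  by (auto intro: finite_subset[of _ "supp f \<union> supp g"]) (metis add.left_neutral)

lemma isA_smulA: "isA f \<Longrightarrow> isA (smulA c f)"
  unfolding isA_def smulA_def by (auto intro: finite_subset[of _ "supp f"])

lemma isA_sumA: "finite S \<Longrightarrow> (\<And>x. x \<in> S \<Longrightarrow> isA (F x)) \<Longrightarrow> isA (sumA F S)"
  by (induction S rule: finite_induct) (simp_all add: sumA_empty isA_zeroA sumA_insert isA_addA)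

lemma isA_finite_supp: "isA f \<Longrightarrow> finite (supp f)"
  by (simp add: isA_def)

locale differential =
  fixes th :: real and d :: "alg \<Rightarrow> form1"
  assumes is_diff: "is_diff th d"
begin

lemma d_addA: "isA f \<Longrightarrow> isA g \<Longrightarrow> d (addA f g) = add1 (d f) (d g)"
  using is_diff by (simp add: is_diff_def)

lemma d_smulA: "isA f \<Longrightarrow> d (smulA c f) = smul1 c (d f)"
  using is_diff by (simp add: is_diff_def)

lemma d_mulA: "isA f \<Longrightarrow> isA g \<Longrightarrow> d (mulA th f g) = add1 (ractO th (d f) g) (lact1 th f (d g))"
  using is_diff by (simp add: is_diff_def)

lemma d_zeroA: "d zeroA = (\<lambda>_. zeroA)"
proof -
  have "zeroA = smulA 0 zeroA" by (simp add: zeroA_def smulA_def)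
  then have "d zeroA = smul1 0 (d zeroA)" using d_smulA[of zeroA 0] isA_zeroA by simp
  then show ?thesis by (simp add: smul1_def smulA_def zeroA_def)
qed

lemma d_sumA:
  "finite S \<Longrightarrow> (\<And>x. x \<in> S \<Longrightarrow> isA (F x)) \<Longrightarrow> d (sumA F S) = (\<lambda>k. sumA (\<lambda>x. d (F x) k) S)"
proof (induction S rule: finite_induct)
  case empty
  then show ?case by (simp add: sumA_empty d_zeroA)
next
  case (insert x S)
  then show ?case by (simp add: sumA_insert d_addA isA_sumA add1_def)
qed

lemma d_oneA: "d oneA = (\<lambda>_. zeroA)"
proof
  fix k
  let ?x = "d oneA k"
  have "d oneA = d (mulA th oneA oneA)"
    by (simp add: mulA_oneA_left isA_finite_supp isA_oneA)
  also have "\<dots> = (\<lambda>i. addA (mulA th (d oneA i) oneA) (mulA th oneA (d oneA i)))"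
    by (simp add: d_mulA isA_oneA add1_def ractO_def lact1_def twist_oneA)
  finally have leibniz: "d oneA = (\<lambda>i. addA (mulA th (d oneA i) oneA) (mulA th oneA (d oneA i)))" .
  have x: "?x = addA (mulA th ?x oneA) (mulA th oneA ?x)"
    by (subst (1) leibniz) (rule refl)
  show "?x = zeroA"
  proof (cases "finite (supp ?x)")
    case True
    with x have "?x = addA ?x ?x" by (simp add: mulA_oneA_right mulA_oneA_left)
    then have "?x m = ?x m + ?x m" for m by (metis addA_def)
    then show ?thesis by (auto simp: zeroA_def)
  next
    case False
    with x show ?thesis by (simp add: mulA_infinite_supp addA_def zeroA_def)
  qed
qed

text \<open>d f need not have finite support, so the unit law for it comes from the Leibniz rule.\<close>

lemma mulA_d_oneA:
  assumes "isA f"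
  shows "mulA th (d f k) oneA = d f k"
proof -
  have "d f = d (mulA th f oneA)"
    using assms by (simp add: mulA_oneA_right isA_finite_supp)
  also have "\<dots> = (\<lambda>i. mulA th (d f i) oneA)"
    using assms by (simp add: d_mulA isA_oneA d_oneA add1_def ractO_def lact1_def twist_oneA
        mulA_zeroA_right) (simp add: addA_def zeroA_def)
  finally show ?thesis by (simp add: fun_eq_iff)
qed

lemma nablaT_pure_basis:
  assumes "isA u" "k \<in> idx" "j \<in> idx" "a \<in> idx"
  shows "nablaT_pure th d (lact1 th u (dz i)) (eE b) k j a = (if i = j \<and> b = a then d u k else zeroA)"
proof -
  let ?w = "lact1 th u (dz i)"
  have w: "?w = (\<lambda>l. if l = i then u else zeroA)"
    using assms by (auto simp: lact1_def dz_def mulA_oneA_right mulA_zeroA_right isA_finite_supp)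
  have "nablaSp d (eE b) = (\<lambda>_ _. zeroA)"
    by (intro ext) (simp add: nablaSp_def restr2_def eE_def d_oneA d_zeroA)
  then have "sigma_id th (tensO_OE th ?w (nablaSp d (eE b))) k j a = zeroA"
    by (simp add: sigma_id_def tensO_OE_def restr3_def twist_zeroA mulA_zeroA_right)
      (simp add: smulA_def zeroA_def)
  moreover have "tensOO_E th (nablaO d ?w) (eE b) k j a = (if i = j \<and> b = a then d u k else zeroA)"
    using assms
    by (auto simp: tensOO_E_def restr3_def nablaO_def restr2_def w eE_def twist_oneA twist_zeroA
        mulA_d_oneA d_zeroA mulA_zeroA_left mulA_zeroA_right)
  ultimately show ?thesis
    by (simp add: nablaT_pure_def add3_def) (simp add: addA_def zeroA_def)
qed

lemma nablaT_apply:
  assumes "\<And>i a. isA (U i a)" "k \<in> idx" "j \<in> idx" "a \<in> idx"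
  shows "nablaT th d U k j a = d (U j a) k"
proof -
  have "nablaT th d U k j a = sumA (\<lambda>x. if x = (j, a) then d (U j a) k else zeroA) (idx \<times> idx)"
    unfolding nablaT_def sum3_def using assms
    by (intro sumA_cong) (auto simp: nablaT_pure_basis)
  then show ?thesis
    using assms by (simp add: sumA_delta)
qed

lemma clifford_compatibility:
  assumes "\<And>i a. isA (U i a)"
  shows "nablaSp d (gamma th U) = id_gamma th (nablaT th d U)"
proof (rule ext, rule ext)
  fix k b
  show "nablaSp d (gamma th U) k b = id_gamma th (nablaT th d U) k b"
  proof (cases "k \<in> idx \<and> b \<in> idx")
    case True
    then have "nablaSp d (gamma th U) k b =
        sumA (\<lambda>(i, a). d (smulA (gam th i b a) (U i a)) k) (idx \<times> idx)"
      using assms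
      by (simp add: nablaSp_def restr2_def gamma_def restr1_def d_sumA isA_smulA case_prod_beta')
    also have "\<dots> = sumA (\<lambda>(j, a). smulA (gam th j b a) (nablaT th d U k j a)) (idx \<times> idx)"
      using assms True by (intro sumA_cong) (auto simp: d_smulA smul1_def nablaT_apply)
    also have "\<dots> = id_gamma th (nablaT th d U) k b"
      using True by (simp add: id_gamma_def restr2_def)
    finally show ?thesis .
  qed (auto simp: nablaSp_def id_gamma_def restr2_def)
qed

end

theorem proposition4p6:
  fixes th :: real and d :: "alg \<Rightarrow> form1"
  assumes "is_diff th d"
  shows "(\<forall>w z s. isV w \<longrightarrow> isV z \<longrightarrow> isV s \<longrightarrow>
            add1 (gamma2 th (tensO_OE th w (tensOE th z s)))
                 (gamma2 th (tensOO_E th (sigma th (tensOE th w z)) s))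
            = lact1 th (smulA (-2) (ginv (tensOE th w z))) s)
       \<and> (\<forall>U. (\<forall>i a. isA (U i a)) \<longrightarrow>
            nablaSp d (gamma th U) = id_gamma th (nablaT th d U))"
proof -
  interpret differential th d
    using assms by unfold_locales
  show ?thesis
    using clifford_relation clifford_compatibility by blast
qed

end
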